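(* Let $X$ be a finite-dimensional real vector space of dimension greater than two, let $\mathcal{P}$ and $\mathcal{Q}$ be two convex bodies in $X$ which contain the origin as an interior point, and let $W\subset X$ be a $1$-dimensional subspace. If the dual body $\mathcal{P}^*$ is strictly convex and for every hyperplane (linear subspace of codimension one) $Y\subset X$ containing $W$ the convex bodies $(\mathcal{P}\cap Y)^*$ and $(\mathcal{Q}\cap Y)^*$ in $Y^*$ are translates of each other, then $\mathcal{P}^*$ and $\mathcal{Q}^*$ are translates of each other in $X^*$.
   Context: For a convex body $\mathcal{P}$ in a vector space $X$ containing the origin as an interior point, its dual is $\mathcal{P}^*=\{\boldsymbol\xi\in X^*:\boldsymbol\xi(\mathbf{v})\le1\text{ for all }\mathbf{v}\in\mathcal{P}\}$; for a subspace $Y$, $(\mathcal{P}\cap Y)^*\subset Y^*$ is the dual of $\mathcal{P}\cap Y$ taken within $Y$. *)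

theory Defs
  imports "HOL-Analysis.Analysis"
begin

definition convex_body :: "'a::euclidean_space set \<Rightarrow> bool" where
  "convex_body S \<longleftrightarrow> compact S \<and> convex S \<and> interior S \<noteq> {}"

definition strictly_convex :: "'a::euclidean_space set \<Rightarrow> bool" where
  "strictly_convex S \<longleftrightarrow> convex S \<and>
     (\<forall>x\<in>S. \<forall>y\<in>S. x \<noteq> y \<longrightarrow> open_segment x y \<subseteq> interior S)"

text \<open>Dual of K taken within the subspace Y. Linear functionals on Y are represented
  (Riesz) by vectors of Y acting via the inner product. For Y = UNIV this is the dual body in X^*.\<close>
definition dual_in :: "'a::euclidean_space set \<Rightarrow> 'a set \<Rightarrow> 'a set" where
  "dual_in Y K = {\<xi> \<in> Y. \<forall>v\<in>K. \<xi> \<bullet> v \<le> 1}"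

definition translates_in :: "'a::euclidean_space set \<Rightarrow> 'a set \<Rightarrow> 'a set \<Rightarrow> bool" where
  "translates_in Y A B \<longleftrightarrow> (\<exists>t\<in>Y. A = (\<lambda>x. t + x) ` B)"

end

theory Submission
  imports Defs
begin

text \<open>Fix \<open>w \<noteq> 0\<close> in \<open>W\<close>. Strict convexity of \<open>P\<^sup>*\<close> makes \<open>p\<close>, the maximiser of
  \<open>\<xi> \<mapsto> \<xi> \<bullet> w\<close> on \<open>P\<^sup>*\<close>, unique; let \<open>q\<close> be a maximiser on \<open>Q\<^sup>*\<close>. By Hahn-Banach, restricting
  functionals to a hyperplane \<open>Y \<supseteq> W\<close> maps \<open>P\<^sup>*\<close> onto \<open>(P \<inter> Y)\<^sup>*\<close> without changing the value
  at \<open>w\<close>. Hence if \<open>(P \<inter> Y)\<^sup>* = t + (Q \<inter> Y)\<^sup>*\<close>, the functional \<open>t + q|Y\<close> lifts to a maximiser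
  on \<open>P\<^sup>*\<close>, i.e. to \<open>p\<close>, and so \<open>t = (p - q)|Y\<close>. Since \<open>dim X > 2\<close>, every vector lies in some
  such \<open>Y\<close>, and comparing \<open>P\<^sup>*\<close> with \<open>(p - q) + Q\<^sup>*\<close> on each of these sections gives the
  claim.\<close>

lemma exists_subspace_representative:
  fixes x :: "'a::euclidean_space"
  assumes "subspace Y"
  shows "\<exists>x'\<in>Y. \<forall>y\<in>Y. x' \<bullet> y = x \<bullet> y"
proof -
  obtain a b where ab: "a \<in> span Y" "\<And>w. w \<in> span Y \<Longrightarrow> orthogonal b w" "x = a + b"
    using orthogonal_subspace_decomp_exists by blast
  have "a \<in> Y" using ab(1) assms span_eq_iff by blast
  moreover have "a \<bullet> y = x \<bullet> y" if "y \<in> Y" for y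
    using ab(2)[OF span_base[OF that]] ab(3) by (simp add: orthogonal_def inner_add_left)
  ultimately show ?thesis by blast
qed

lemma exists_hyperplane_containing:
  fixes W :: "'a::euclidean_space set"
  assumes "dim W + 1 < DIM('a)"
  shows "\<exists>Y. subspace Y \<and> dim Y = DIM('a) - 1 \<and> W \<subseteq> Y \<and> v \<in> Y"
proof -
  have "dim (insert v W) < DIM('a)" using dim_insert[of v W] assms by (simp split: if_splits)
  then obtain u where u: "u \<noteq> 0" "\<And>y. y \<in> span (insert v W) \<Longrightarrow> orthogonal u y"
    using orthogonal_to_subspace_exists by blast
  have "insert v W \<subseteq> {x. u \<bullet> x = 0}"
    using u(2)[OF span_base] by (auto simp: orthogonal_def)
  then show ?thesis
    using subspace_hyperplane[of u] dim_hyperplane[OF u(1)] by blast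
qed

lemma compact_dual_in_UNIV:
  fixes K :: "'a::euclidean_space set"
  assumes "0 \<in> interior K"
  shows "compact (dual_in UNIV K)"
proof -
  obtain r where r: "r > 0" "cball 0 r \<subseteq> K"
    using assms mem_interior_cball by blast
  have "dual_in UNIV K = (\<Inter>v\<in>K. {\<xi>. v \<bullet> \<xi> \<le> 1})"
    unfolding dual_in_def by (auto simp: inner_commute)
  then have "closed (dual_in UNIV K)" by (simp add: closed_INT closed_halfspace_le)
  moreover have "norm \<xi> \<le> 1 / r" if \<xi>: "\<xi> \<in> dual_in UNIV K" for \<xi>
  proof (cases "\<xi> = 0")
    case True
    then show ?thesis using r by simp
  next
    case False
    have "(r / norm \<xi>) *\<^sub>R \<xi> \<in> K" using r False by auto
    then have "\<xi> \<bullet> ((r / norm \<xi>) *\<^sub>R \<xi>) \<le> 1" using \<xi> by (auto simp: dual_in_def)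
    then have "r * norm \<xi> \<le> 1" using False by (simp add: dot_square_norm power2_eq_square)
    then show ?thesis using r by (simp add: pos_le_divide_eq mult.commute)
  qed
  then have "bounded (dual_in UNIV K)" unfolding bounded_iff by blast
  ultimately show ?thesis by (simp add: compact_eq_bounded_closed)
qed

lemma dual_in_UNIV_attains_sup:
  fixes K :: "'a::euclidean_space set"
  assumes "0 \<in> interior K"
  obtains p where "p \<in> dual_in UNIV K" "\<And>\<xi>. \<xi> \<in> dual_in UNIV K \<Longrightarrow> \<xi> \<bullet> w \<le> p \<bullet> w"
proof -
  have "0 \<in> dual_in UNIV K" by (simp add: dual_in_def)
  then show ?thesis
    using continuous_attains_sup[OF compact_dual_in_UNIV[OF assms], of "\<lambda>\<xi>. \<xi> \<bullet> w"] that
    by (fastforce intro: continuous_intros)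
qed

lemma strictly_convex_inner_maximizer_unique:
  fixes S :: "'a::euclidean_space set"
  assumes S: "strictly_convex S" and "w \<noteq> 0"
    and p: "p \<in> S" "\<And>\<xi>. \<xi> \<in> S \<Longrightarrow> \<xi> \<bullet> w \<le> p \<bullet> w"
    and \<xi>: "\<xi> \<in> S" "p \<bullet> w \<le> \<xi> \<bullet> w"
  shows "\<xi> = p"
proof (rule ccontr)
  assume "\<xi> \<noteq> p"
  then have "midpoint \<xi> p \<in> interior S"
    using S \<xi>(1) p(1) unfolding strictly_convex_def by (meson midpoint_in_open_segment subsetD)
  then obtain e where e: "e > 0" "ball (midpoint \<xi> p) e \<subseteq> S" using mem_interior by blast
  define m where "m = midpoint \<xi> p + (e / (2 * norm w)) *\<^sub>R w"
  have "m \<in> S" using e \<open>w \<noteq> 0\<close> unfolding m_def by (auto simp: dist_norm)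
  moreover have "midpoint \<xi> p \<bullet> w = p \<bullet> w"
    using p(2)[OF \<xi>(1)] \<xi>(2) by (simp add: midpoint_def inner_add_left)
  then have "m \<bullet> w > p \<bullet> w"
    using e \<open>w \<noteq> 0\<close> unfolding m_def by (simp add: inner_add_left)
  ultimately show False using p(2) by force
qed

lemma dual_in_lt_one_on_interior:
  fixes K Y :: "'a::euclidean_space set"
  assumes "subspace Y" and \<eta>: "\<eta> \<in> dual_in Y (K \<inter> Y)" and v: "v \<in> interior K" "v \<in> Y"
  shows "\<eta> \<bullet> v < 1"
proof (cases "v = 0")
  case True
  then show ?thesis by simp
next
  case False
  obtain e where e: "e > 0" "ball v e \<subseteq> K" using v(1) mem_interior by blast
  define c where "c = 1 + e / (2 * norm v)"
  have "c *\<^sub>R v \<in> K" using e False by (auto simp: c_def dist_norm algebra_simps)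
  moreover have "c *\<^sub>R v \<in> Y" using v(2) \<open>subspace Y\<close> by (simp add: subspace_scale)
  ultimately have "c *\<^sub>R v \<in> K \<inter> Y" by blast
  then have "\<eta> \<bullet> (c *\<^sub>R v) \<le> 1" using \<eta> unfolding dual_in_def by blast
  then have "c * (\<eta> \<bullet> v) \<le> 1" by simp
  moreover have "c > 1" using e False by (simp add: c_def)
  ultimately show ?thesis by (smt (verit) mult_less_cancel_right1)
qed

lemma inner_proportional_if_bounded_below_on_level_set:
  fixes Y :: "'a::euclidean_space set"
  assumes "subspace Y" and l0: "l0 \<in> Y" "\<eta> \<bullet> l0 = 1"
    and bdd: "\<And>l. l \<in> Y \<Longrightarrow> \<eta> \<bullet> l = 1 \<Longrightarrow> b \<le> a \<bullet> l"
    and y: "y \<in> Y"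
  shows "a \<bullet> y = (a \<bullet> l0) * (\<eta> \<bullet> y)"
proof -
  define d where "d = y - (\<eta> \<bullet> y) *\<^sub>R l0"
  have d: "d \<in> Y" "\<eta> \<bullet> d = 0"
    using assms by (simp_all add: d_def subspace_diff subspace_scale inner_diff_right)
  have "a \<bullet> d = 0"
  proof (rule ccontr)
    assume ad: "a \<bullet> d \<noteq> 0"
    define l where "l = l0 + ((b - a \<bullet> l0 - 1) / (a \<bullet> d)) *\<^sub>R d"
    have "l \<in> Y" "\<eta> \<bullet> l = 1"
      using assms d by (simp_all add: l_def subspace_add subspace_scale inner_add_right)
    moreover have "a \<bullet> l = b - 1" using ad by (simp add: l_def inner_add_right)
    ultimately show False using bdd by force
  qed
  then show ?thesis by (simp add: d_def inner_diff_right)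
qed

lemma inner_pos_bound_if_zero_in_interior:
  fixes K :: "'a::euclidean_space set"
  assumes "0 \<in> interior K" "a \<noteq> 0" "\<And>x. x \<in> interior K \<Longrightarrow> a \<bullet> x \<le> b"
  shows "b > 0"
proof -
  obtain r where r: "r > 0" "ball 0 r \<subseteq> interior K"
    using assms(1) open_interior open_contains_ball by blast
  define x where "x = (r / (2 * norm a)) *\<^sub>R a"
  have "x \<in> interior K" using assms(2) r by (auto simp: x_def)
  moreover have "a \<bullet> x > 0" using assms(2) r by (simp add: x_def)
  ultimately show ?thesis using assms(3) by fastforce
qed

lemma dual_in_extend:
  fixes K Y :: "'a::euclidean_space set"
  assumes K: "convex K" "0 \<in> interior K" and "subspace Y"
    and \<eta>: "\<eta> \<in> dual_in Y (K \<inter> Y)"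
  obtains \<xi> where "\<xi> \<in> dual_in UNIV K" "\<And>y. y \<in> Y \<Longrightarrow> \<xi> \<bullet> y = \<eta> \<bullet> y"
proof (cases "\<eta> = 0")
  case True
  then show ?thesis using that[of 0] by (simp add: dual_in_def)
next
  case False
  \<comment> \<open>Separate \<open>interior K\<close> from the affine hyperplane \<open>{\<eta> = 1}\<close> of \<open>Y\<close>; the separating
    functional, normalised, is the extension.\<close>
  define L where "L = Y \<inter> {v. \<eta> \<bullet> v = 1}"
  define l0 where "l0 = (1 / (\<eta> \<bullet> \<eta>)) *\<^sub>R \<eta>"
  have l0: "l0 \<in> Y" "\<eta> \<bullet> l0 = 1"
    using False \<eta> \<open>subspace Y\<close> by (auto simp: l0_def dual_in_def subspace_scale)
  have disjoint: "interior K \<inter> L = {}"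
    using dual_in_lt_one_on_interior[OF \<open>subspace Y\<close> \<eta>] by (fastforce simp: L_def)
  have "convex L"
    unfolding L_def by (intro convex_Int subspace_imp_convex[OF \<open>subspace Y\<close>] convex_hyperplane)
  moreover have "interior K \<noteq> {}" "L \<noteq> {}" using K(2) l0 by (auto simp: L_def)
  ultimately obtain a b where ab: "a \<noteq> 0" "\<And>x. x \<in> interior K \<Longrightarrow> a \<bullet> x \<le> b"
      "\<And>l. l \<in> L \<Longrightarrow> b \<le> a \<bullet> l"
    using separating_hyperplane_sets[OF convex_interior[OF K(1)] _ _ _ disjoint] by blast
  have "b > 0" using inner_pos_bound_if_zero_in_interior[OF K(2) ab(1,2)] .
  moreover have "b \<le> a \<bullet> l0" using ab(3) l0 by (simp add: L_def)
  ultimately have c: "a \<bullet> l0 > 0" by linarith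
  define \<xi> where "\<xi> = (1 / (a \<bullet> l0)) *\<^sub>R a"
  have "\<xi> \<bullet> y = \<eta> \<bullet> y" if "y \<in> Y" for y
    using inner_proportional_if_bounded_below_on_level_set[OF \<open>subspace Y\<close> l0 _ that, of b a]
      ab(3) c by (simp add: \<xi>_def L_def)
  moreover have "K \<subseteq> {x. \<xi> \<bullet> x \<le> 1}"
  proof -
    have "interior K \<subseteq> {x. \<xi> \<bullet> x \<le> 1}"
      using ab(2) \<open>b \<le> a \<bullet> l0\<close> c by (fastforce simp: \<xi>_def field_simps)
    then have "closure (interior K) \<subseteq> {x. \<xi> \<bullet> x \<le> 1}"
      by (simp add: closure_minimal closed_halfspace_le)
    then show ?thesis
      using convex_closure_interior[OF K(1)] K(2) closure_subset by blast
  qed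
  ultimately show ?thesis using that unfolding dual_in_def by blast
qed

lemma section_translation_eq_maximizer_difference:
  fixes K L Y :: "'a::euclidean_space set"
  assumes K: "convex K" "0 \<in> interior K" and L: "convex L" "0 \<in> interior L"
    and "subspace Y" "w \<in> Y" "w \<noteq> 0"
    and strict: "strictly_convex (dual_in UNIV K)"
    and p: "p \<in> dual_in UNIV K" "\<And>\<xi>. \<xi> \<in> dual_in UNIV K \<Longrightarrow> \<xi> \<bullet> w \<le> p \<bullet> w"
    and q: "q \<in> dual_in UNIV L" "\<And>\<zeta>. \<zeta> \<in> dual_in UNIV L \<Longrightarrow> \<zeta> \<bullet> w \<le> q \<bullet> w"
    and t: "dual_in Y (K \<inter> Y) = (\<lambda>x. t + x) ` dual_in Y (L \<inter> Y)"
    and "y \<in> Y"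
  shows "t \<bullet> y = (p - q) \<bullet> y"
proof -
  obtain q' where q': "q' \<in> Y" "\<forall>y\<in>Y. q' \<bullet> y = q \<bullet> y"
    using exists_subspace_representative[OF \<open>subspace Y\<close>] by blast
  have "q' \<in> dual_in Y (L \<inter> Y)" using q(1) q' by (simp add: dual_in_def)
  then have "t + q' \<in> dual_in Y (K \<inter> Y)" using t by blast
  then obtain \<xi> where \<xi>: "\<xi> \<in> dual_in UNIV K" "\<And>y. y \<in> Y \<Longrightarrow> \<xi> \<bullet> y = (t + q') \<bullet> y"
    using dual_in_extend[OF K \<open>subspace Y\<close>] by blast
  obtain p' where p': "p' \<in> Y" "\<forall>y\<in>Y. p' \<bullet> y = p \<bullet> y"
    using exists_subspace_representative[OF \<open>subspace Y\<close>] by blast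
  have "p' \<in> dual_in Y (K \<inter> Y)" using p(1) p' by (simp add: dual_in_def)
  then have "p' - t \<in> dual_in Y (L \<inter> Y)" using t by auto
  then obtain \<zeta> where \<zeta>: "\<zeta> \<in> dual_in UNIV L" "\<And>y. y \<in> Y \<Longrightarrow> \<zeta> \<bullet> y = (p' - t) \<bullet> y"
    using dual_in_extend[OF L \<open>subspace Y\<close>] by blast
  have "p \<bullet> w - t \<bullet> w \<le> q \<bullet> w"
    using q(2)[OF \<zeta>(1)] \<zeta>(2) p'(2) \<open>w \<in> Y\<close> by (simp add: inner_diff_left)
  then have "p \<bullet> w \<le> \<xi> \<bullet> w"
    using \<xi>(2) q'(2) \<open>w \<in> Y\<close> by (simp add: inner_add_left)
  then have "\<xi> = p"
    using strictly_convex_inner_maximizer_unique[OF strict \<open>w \<noteq> 0\<close> p \<xi>(1)] by blast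
  then show ?thesis
    using \<xi>(2) q'(2) \<open>y \<in> Y\<close> by (simp add: inner_add_left inner_diff_left)
qed

lemma dual_in_section_translate_le_one:
  fixes K L Y :: "'a::euclidean_space set"
  assumes "subspace Y" "v \<in> Y" "v \<in> L" "\<xi> \<in> dual_in UNIV K"
    and t: "dual_in Y (K \<inter> Y) \<subseteq> (\<lambda>x. t + x) ` dual_in Y (L \<inter> Y)"
    and "\<forall>y\<in>Y. t \<bullet> y = s \<bullet> y"
  shows "(\<xi> - s) \<bullet> v \<le> 1"
proof -
  obtain \<xi>' where \<xi>': "\<xi>' \<in> Y" "\<forall>y\<in>Y. \<xi>' \<bullet> y = \<xi> \<bullet> y"
    using exists_subspace_representative[OF \<open>subspace Y\<close>] by blast
  have "\<xi>' \<in> dual_in Y (K \<inter> Y)" using \<open>\<xi> \<in> dual_in UNIV K\<close> \<xi>' by (simp add: dual_in_def)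
  then obtain \<eta> where "\<eta> \<in> dual_in Y (L \<inter> Y)" "\<xi>' = t + \<eta>" using t by blast
  then have "(\<xi>' - t) \<bullet> v \<le> 1" using assms(2,3) by (simp add: dual_in_def)
  then show ?thesis using assms(2,6) \<xi>'(2) by (simp add: inner_diff_left)
qed

lemma dual_in_UNIV_translate_if_sections:
  fixes K L :: "'a::euclidean_space set"
  assumes sections: "\<And>v. \<exists>Y t. subspace Y \<and> v \<in> Y \<and> (\<forall>y\<in>Y. t \<bullet> y = s \<bullet> y) \<and>
      dual_in Y (K \<inter> Y) = (\<lambda>x. t + x) ` dual_in Y (L \<inter> Y)"
  shows "dual_in UNIV K = (\<lambda>x. s + x) ` dual_in UNIV L"
proof
  show "dual_in UNIV K \<subseteq> (\<lambda>x. s + x) ` dual_in UNIV L"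
  proof
    fix \<xi> assume \<xi>: "\<xi> \<in> dual_in UNIV K"
    have "(\<xi> - s) \<bullet> v \<le> 1" if "v \<in> L" for v
    proof -
      obtain Y t where Y: "subspace Y" "v \<in> Y" "\<forall>y\<in>Y. t \<bullet> y = s \<bullet> y"
          and t: "dual_in Y (K \<inter> Y) = (\<lambda>x. t + x) ` dual_in Y (L \<inter> Y)"
        using sections[of v] by iprover
      show ?thesis
        using dual_in_section_translate_le_one[OF Y(1,2) that \<xi> equalityD1[OF t] Y(3)] .
    qed
    then have "\<xi> - s \<in> dual_in UNIV L" by (simp add: dual_in_def)
    then show "\<xi> \<in> (\<lambda>x. s + x) ` dual_in UNIV L" by (rule rev_image_eqI) simp
  qed
  show "(\<lambda>x. s + x) ` dual_in UNIV L \<subseteq> dual_in UNIV K"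
  proof clarify
    fix \<zeta> assume \<zeta>: "\<zeta> \<in> dual_in UNIV L"
    have "(\<zeta> - (- s)) \<bullet> v \<le> 1" if "v \<in> K" for v
    proof -
      obtain Y t where Y: "subspace Y" "v \<in> Y" "\<forall>y\<in>Y. t \<bullet> y = s \<bullet> y"
          and t: "dual_in Y (K \<inter> Y) = (\<lambda>x. t + x) ` dual_in Y (L \<inter> Y)"
        using sections[of v] by iprover
      have "dual_in Y (L \<inter> Y) \<subseteq> (\<lambda>x. - t + x) ` dual_in Y (K \<inter> Y)"
        unfolding t by (auto simp: image_image)
      moreover have "\<forall>y\<in>Y. - t \<bullet> y = - s \<bullet> y" using Y(3) by simp
      ultimately show ?thesis by (rule dual_in_section_translate_le_one[OF Y(1,2) that \<zeta>])
    qed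
    then show "s + \<zeta> \<in> dual_in UNIV K" by (simp add: dual_in_def add.commute)
  qed
qed

theorem theorem4p5:
  fixes P Q W :: "'a::euclidean_space set"
  assumes "DIM('a) > 2"
    and "convex_body P" and "0 \<in> interior P"
    and "convex_body Q" and "0 \<in> interior Q"
    and "subspace W" and "dim W = 1"
    and "strictly_convex (dual_in UNIV P)"
    and "\<And>Y. subspace Y \<Longrightarrow> dim Y = DIM('a) - 1 \<Longrightarrow> W \<subseteq> Y \<Longrightarrow>
           translates_in Y (dual_in Y (P \<inter> Y)) (dual_in Y (Q \<inter> Y))"
  shows "translates_in UNIV (dual_in UNIV P) (dual_in UNIV Q)"
proof -
  have P: "convex P" "0 \<in> interior P" and Q: "convex Q" "0 \<in> interior Q"
    using assms(2-5) by (auto simp: convex_body_def)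
  obtain w where w: "w \<in> W" "w \<noteq> 0"
    using \<open>dim W = 1\<close> dim_eq_0[of W] by auto
  obtain p where p: "p \<in> dual_in UNIV P" "\<And>\<xi>. \<xi> \<in> dual_in UNIV P \<Longrightarrow> \<xi> \<bullet> w \<le> p \<bullet> w"
    using dual_in_UNIV_attains_sup[OF P(2)] by blast
  obtain q where q: "q \<in> dual_in UNIV Q" "\<And>\<zeta>. \<zeta> \<in> dual_in UNIV Q \<Longrightarrow> \<zeta> \<bullet> w \<le> q \<bullet> w"
    using dual_in_UNIV_attains_sup[OF Q(2)] by blast
  have "\<exists>Y t. subspace Y \<and> v \<in> Y \<and> (\<forall>y\<in>Y. t \<bullet> y = (p - q) \<bullet> y) \<and>
      dual_in Y (P \<inter> Y) = (\<lambda>x. t + x) ` dual_in Y (Q \<inter> Y)" for v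
  proof -
    obtain Y where Y: "subspace Y" "dim Y = DIM('a) - 1" "W \<subseteq> Y" "v \<in> Y"
      using exists_hyperplane_containing[of W v] assms(1,7) by auto
    then obtain t where t: "dual_in Y (P \<inter> Y) = (\<lambda>x. t + x) ` dual_in Y (Q \<inter> Y)"
      using assms(9) unfolding translates_in_def by blast
    have "\<forall>y\<in>Y. t \<bullet> y = (p - q) \<bullet> y"
      using section_translation_eq_maximizer_difference[OF P Q Y(1) _ w(2) assms(8) p q t] Y(3) w(1)
      by auto
    then show ?thesis using Y(1,4) t by blast
  qed
  then have "dual_in UNIV P = (\<lambda>x. (p - q) + x) ` dual_in UNIV Q"
    by (rule dual_in_UNIV_translate_if_sections)
  then show ?thesis unfolding translates_in_def by blast
qed

end
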